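(* Let $\epsilon>0$. There exist constants $K,c>0$ depending only on $\epsilon$ such that for every $n$ and every $\epsilon$-balanced random digraph $\Gamma(n)$ on $[n]$, \[\mathbb{P}\big(\Gamma(n)\text{ is not strongly connected}\big)\le K e^{-cn}.\]
   Context: Digraphs may have multiple edges (and loops). $\deg(i,j)\in\mathbb{Z}_{\ge0}$ is the number of edges from $i$ to $j$. A digraph is strongly connected if there is a directed path from every vertex to every other vertex. A random variable $y$ in a ring $T$ is $\epsilon$-balanced if for every maximal ideal $\mathfrak p$ of $T$ and every $r\in T/\mathfrak p$, $\mathbb{P}(y\equiv r\bmod\mathfrak p)\le1-\epsilon$. A random digraph on $[n]$ is $\epsilon$-balanced if the $\deg(i,j)$ for ordered pairs $i\ne j$ are independent $\epsilon$-balanced random variables in $\mathbb{Z}$. *)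

theory Defs
  imports "HOL-Probability.Probability" "HOL-Computational_Algebra.Primes"
begin

definition off_diag :: "nat \<Rightarrow> (nat \<times> nat) set" where
  "off_diag n = {(i, j). i < n \<and> j < n \<and> i \<noteq> j}"

text \<open>A digraph on {0..<n} given by its edge multiplicities deg(i,j) (loops are
irrelevant for strong connectivity and are not recorded). There is an edge
i -> j iff deg(i,j) > 0.\<close>
definition edge_rel :: "nat \<Rightarrow> (nat \<times> nat \<Rightarrow> nat) \<Rightarrow> (nat \<times> nat) set" where
  "edge_rel n deg = {(i, j). (i, j) \<in> off_diag n \<and> deg (i, j) > 0}"

definition strongly_connected :: "nat \<Rightarrow> (nat \<times> nat \<Rightarrow> nat) \<Rightarrow> bool" where
  "strongly_connected n deg \<longleftrightarrow>
     (\<forall>i<n. \<forall>j<n. (i, j) \<in> (edge_rel n deg)\<^sup>*)"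

text \<open>A (nonnegative) integer random variable with law mu is eps-balanced: for every
maximal ideal pZ of Z (p prime) and every residue class r mod p,
P(y = r mod p) <= 1 - eps.\<close>
definition eps_balanced :: "real \<Rightarrow> nat pmf \<Rightarrow> bool" where
  "eps_balanced \<epsilon> \<mu> \<longleftrightarrow>
     (\<forall>p r :: int. prime p \<longrightarrow>
        measure_pmf.prob \<mu> {x. int x mod p = r mod p} \<le> 1 - \<epsilon>)"

definition random_digraph :: "nat \<Rightarrow> (nat \<Rightarrow> nat \<Rightarrow> nat pmf) \<Rightarrow> (nat \<times> nat \<Rightarrow> nat) pmf" where
  "random_digraph n \<mu> = Pi_pmf (off_diag n) 0 (\<lambda>(i, j). \<mu> i j)"

end

theory Submission
  imports Defs
begin

text \<open>If the digraph is not strongly connected, the set S of vertices reachable from some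
vertex is a nonempty proper subset with no edge leaving it. For a fixed S this has probability
at most (1 - \<epsilon>)^(|S|(n-|S|)), since every degree is 0 with probability at most 1 - \<epsilon>
(0 lies in a single residue class mod 2). Writing 1 - \<epsilon> \<le> r^2 and summing over S,
C(n,k) r^(2k(n-k)) \<le> (n r^n)^min(k,n-k) \<le> n r^n, so the failure probability is at most
n^2 r^n, which decays exponentially.\<close>

definition no_edge_leaving :: "nat \<Rightarrow> nat set \<Rightarrow> (nat \<times> nat \<Rightarrow> nat) set" where
  "no_edge_leaving n S = Pi (off_diag n) (\<lambda>(i, j). if i \<in> S \<and> j \<notin> S then {0} else UNIV)"

lemma finite_off_diag: "finite (off_diag n)"
  by (rule finite_subset[of _ "{0..<n} \<times> {0..<n}"]) (auto simp: off_diag_def)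

lemma not_strongly_connected_no_edge_leaving:
  assumes "\<not> strongly_connected n d"
  obtains S where "S \<subseteq> {0..<n}" "S \<noteq> {}" "S \<noteq> {0..<n}" "d \<in> no_edge_leaving n S"
proof -
  obtain i j where ij: "i < n" "j < n" "(i, j) \<notin> (edge_rel n d)\<^sup>*"
    using assms unfolding strongly_connected_def by blast
  define S where "S = {k. k < n \<and> (i, k) \<in> (edge_rel n d)\<^sup>*}"
  have "d (a, b) = 0" if ab: "(a, b) \<in> off_diag n" "a \<in> S" "b \<notin> S" for a b
  proof (rule ccontr)
    assume "d (a, b) \<noteq> 0"
    have "(i, a) \<in> (edge_rel n d)\<^sup>*" using ab(2) by (simp add: S_def)
    moreover from \<open>d (a, b) \<noteq> 0\<close> ab(1) have "(a, b) \<in> edge_rel n d" by (simp add: edge_rel_def)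
    ultimately have "(i, b) \<in> (edge_rel n d)\<^sup>*" by (rule rtrancl_into_rtrancl)
    with ab show False by (simp add: S_def off_diag_def)
  qed
  then have "d \<in> no_edge_leaving n S" by (auto simp: no_edge_leaving_def)
  moreover have "S \<subseteq> {0..<n}" by (auto simp: S_def)
  moreover have "i \<in> S" "j \<notin> S" using ij by (simp_all add: S_def)
  then have "S \<noteq> {}" "S \<noteq> {0..<n}" using ij(2) by auto
  ultimately show thesis by (intro that)
qed

lemma eps_balanced_prob_singleton_le:
  assumes "eps_balanced \<epsilon> \<mu>"
  shows "measure_pmf.prob \<mu> {x} \<le> 1 - \<epsilon>"
proof -
  have "measure_pmf.prob \<mu> {x} \<le> measure_pmf.prob \<mu> {y. int y mod 2 = int x mod 2}"
    by (rule measure_pmf.finite_measure_mono) auto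
  also have "\<dots> \<le> 1 - \<epsilon>"
    using assms[unfolded eps_balanced_def, rule_format, of 2 "int x"] by simp
  finally show ?thesis .
qed

lemma prob_no_edge_leaving_le:
  assumes zero: "\<forall>(i, j)\<in>off_diag n. measure_pmf.prob (\<mu> i j) {0} \<le> q"
    and S: "S \<subseteq> {0..<n}"
  shows "measure_pmf.prob (random_digraph n \<mu>) (no_edge_leaving n S)
           \<le> q ^ (card S * (n - card S))"
proof -
  let ?C = "S \<times> ({0..<n} - S)"
  let ?A = "\<lambda>(i, j). if i \<in> S \<and> j \<notin> S then {0} else (UNIV :: nat set)"
  have C: "?C \<subseteq> off_diag n" using S by (auto simp: off_diag_def)
  have "measure_pmf.prob (random_digraph n \<mu>) (no_edge_leaving n S)
      = (\<Prod>p\<in>off_diag n. measure_pmf.prob (case_prod \<mu> p) (?A p))"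
    unfolding random_digraph_def no_edge_leaving_def by (rule measure_Pi_pmf_Pi[OF finite_off_diag])
  also have "\<dots> \<le> (\<Prod>p\<in>off_diag n. if p \<in> ?C then q else 1)"
  proof (rule prod_mono)
    fix p assume p: "p \<in> off_diag n"
    obtain a b where p_ab: "p = (a, b)" by (cases p)
    have "measure_pmf.prob (\<mu> a b) {0} \<le> q" using zero p p_ab by auto
    then show "0 \<le> measure_pmf.prob (case_prod \<mu> p) (?A p) \<and>
        measure_pmf.prob (case_prod \<mu> p) (?A p) \<le> (if p \<in> ?C then q else 1)"
      using p by (auto simp: p_ab off_diag_def)
  qed
  also have "\<dots> = (\<Prod>p\<in>?C. q)"
  proof -
    have "{p \<in> off_diag n. p \<in> ?C} = ?C" using C by blast
    then show ?thesis
      using prod.inter_filter[OF finite_off_diag[of n], of "\<lambda>_. q" "\<lambda>p. p \<in> ?C"] by simp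
  qed
  also have "\<dots> = q ^ card ?C" by simp
  also have "card ?C = card S * (n - card S)"
    using S finite_subset[OF S] by (simp add: card_cartesian_product card_Diff_subset)
  finally show ?thesis .
qed

lemma binomial_mult_power_le_lower_half:
  fixes r :: real
  assumes r: "0 \<le> r" "r \<le> 1" and nr: "real n * r ^ n \<le> 1" and k: "1 \<le> k" "k \<le> n - k"
  shows "real (n choose k) * r ^ (2 * k * (n - k)) \<le> real n * r ^ n"
proof -
  have "n * k \<le> 2 * k * (n - k)"
    using mult_le_mono2[of n "2 * (n - k)" k] k by (simp add: mult_ac)
  then have "r ^ (2 * k * (n - k)) \<le> r ^ (n * k)"
    by (rule power_decreasing[OF _ r])
  then have pow: "r ^ (2 * k * (n - k)) \<le> (r ^ n) ^ k"
    by (simp only: power_mult)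
  have "n choose k \<le> n ^ k"
    using k by (intro binomial_le_pow) linarith
  then have binom: "real (n choose k) \<le> real n ^ k"
    by (metis of_nat_le_iff of_nat_power)
  have "real (n choose k) * r ^ (2 * k * (n - k)) \<le> real n ^ k * (r ^ n) ^ k"
    by (rule mult_mono[OF binom pow]) (use r in auto)
  also have "\<dots> = (real n * r ^ n) ^ k"
    by (simp add: power_mult_distrib)
  also have "\<dots> \<le> real n * r ^ n"
    using power_decreasing[OF k(1), of "real n * r ^ n"] r nr by simp
  finally show ?thesis .
qed

lemma binomial_mult_power_le:
  fixes r :: real
  assumes "0 \<le> r" "r \<le> 1" "real n * r ^ n \<le> 1" and k: "1 \<le> k" "k < n"
  shows "real (n choose k) * r ^ (2 * k * (n - k)) \<le> real n * r ^ n"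
proof (cases "k \<le> n - k")
  case True
  then show ?thesis using binomial_mult_power_le_lower_half assms by blast
next
  case False
  then have "real (n choose (n - k)) * r ^ (2 * (n - k) * (n - (n - k))) \<le> real n * r ^ n"
    using binomial_mult_power_le_lower_half[of r n "n - k"] assms by simp
  then show ?thesis using k by (simp add: binomial_symmetric[symmetric] mult_ac)
qed

lemma sum_proper_subsets_power_le:
  fixes r :: real
  assumes r: "0 \<le> r" "r \<le> 1" and nr: "real n * r ^ n \<le> 1"
  shows "(\<Sum>S | S \<subseteq> {0..<n} \<and> S \<noteq> {} \<and> S \<noteq> {0..<n}. r ^ (2 * (card S * (n - card S))))
           \<le> real n ^ 2 * r ^ n"
proof -
  let ?F = "{S. S \<subseteq> {0..<n} \<and> S \<noteq> {} \<and> S \<noteq> {0..<n}}"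
  have finF: "finite ?F" by (rule finite_subset[of _ "Pow {0..<n}"]) auto
  have card_F: "card ` ?F \<subseteq> {1..n-1}"
  proof
    fix m assume "m \<in> card ` ?F"
    then obtain S where S: "S \<in> ?F" "m = card S" by blast
    then have "card S \<noteq> 0" "card S < n"
      using finite_subset[of S "{0..<n}"] psubset_card_mono[of "{0..<n}" S] by auto
    then show "m \<in> {1..n-1}" using S by auto
  qed
  have "(\<Sum>S\<in>?F. r ^ (2 * (card S * (n - card S))))
      = (\<Sum>k\<in>{1..n-1}. \<Sum>S | S \<in> ?F \<and> card S = k. r ^ (2 * (card S * (n - card S))))"
    by (rule sum.group[OF finF _ card_F, symmetric]) simp
  also have "\<dots> = (\<Sum>k\<in>{1..n-1}. real (n choose k) * r ^ (2 * k * (n - k)))"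
  proof (rule sum.cong[OF refl])
    fix k assume k: "k \<in> {1..n-1}"
    then have "{S. S \<in> ?F \<and> card S = k} = {S. S \<subseteq> {0..<n} \<and> card S = k}" by auto
    then show "(\<Sum>S | S \<in> ?F \<and> card S = k. r ^ (2 * (card S * (n - card S))))
        = real (n choose k) * r ^ (2 * k * (n - k))"
      using n_subsets[of "{0..<n}" k] by (simp add: mult.assoc)
  qed
  also have "\<dots> \<le> (\<Sum>k\<in>{1..n-1}. real n * r ^ n)"
    by (rule sum_mono) (use binomial_mult_power_le[OF r nr] in auto)
  also have "\<dots> \<le> real n ^ 2 * r ^ n"
    using mult_right_mono[of "real (n - 1)" "real n" "real n * r ^ n"] r
    by (simp add: power2_eq_square)
  finally show ?thesis .
qed

lemma prob_not_strongly_connected_le: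
  fixes r :: real
  assumes zero: "\<forall>(i, j)\<in>off_diag n. measure_pmf.prob (\<mu> i j) {0} \<le> r ^ 2"
    and r: "0 \<le> r" "r \<le> 1"
  shows "measure_pmf.prob (random_digraph n \<mu>) {d. \<not> strongly_connected n d} \<le> real n ^ 2 * r ^ n"
proof (cases "real n * r ^ n \<le> 1")
  case True
  let ?P = "measure_pmf.prob (random_digraph n \<mu>)"
  let ?F = "{S. S \<subseteq> {0..<n} \<and> S \<noteq> {} \<and> S \<noteq> {0..<n}}"
  have finF: "finite ?F" by (rule finite_subset[of _ "Pow {0..<n}"]) auto
  have "{d. \<not> strongly_connected n d} \<subseteq> (\<Union>S\<in>?F. no_edge_leaving n S)"
  proof
    fix d assume "d \<in> {d. \<not> strongly_connected n d}"
    then obtain S where "S \<subseteq> {0..<n}" "S \<noteq> {}" "S \<noteq> {0..<n}" "d \<in> no_edge_leaving n S"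
      using not_strongly_connected_no_edge_leaving by blast
    then show "d \<in> (\<Union>S\<in>?F. no_edge_leaving n S)" by blast
  qed
  then have "?P {d. \<not> strongly_connected n d} \<le> ?P (\<Union>S\<in>?F. no_edge_leaving n S)"
    by (rule measure_pmf.finite_measure_mono) simp
  also have "\<dots> \<le> (\<Sum>S\<in>?F. ?P (no_edge_leaving n S))"
    by (rule measure_pmf.finite_measure_subadditive_finite[OF finF]) auto
  also have "\<dots> \<le> (\<Sum>S\<in>?F. r ^ (2 * (card S * (n - card S))))"
    by (rule sum_mono) (use prob_no_edge_leaving_le[OF zero] in \<open>auto simp: power_mult\<close>)
  also have "\<dots> \<le> real n ^ 2 * r ^ n"
    by (rule sum_proper_subsets_power_le[OF r True])
  finally show ?thesis .
next
  case False
  then have "1 \<le> real n"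
    using r by (cases n) (auto simp: mult_le_one)
  then have "real n * r ^ n \<le> real n ^ 2 * r ^ n"
    using r by (simp add: power2_eq_square mult_right_mono)
  then show ?thesis
    using False measure_pmf.prob_le_1[of "random_digraph n \<mu>" "{d. \<not> strongly_connected n d}"]
    by linarith
qed

lemma square_mult_exp_le:
  fixes c x :: real
  assumes c: "c > 0" and x: "x \<ge> 0"
  shows "x ^ 2 * exp (- 2 * c * x) \<le> 4 / c ^ 2 * exp (- c * x)"
proof -
  have "c * x / 2 \<le> exp (c * x / 2)"
    using exp_ge_add_one_self[of "c * x / 2"] by linarith
  then have "(c * x / 2) ^ 2 \<le> exp (c * x / 2) ^ 2"
    by (rule power_mono) (use c x in simp)
  also have "\<dots> = exp (c * x)"
    by (simp flip: exp_of_nat_mult)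
  finally have "c ^ 2 * x ^ 2 \<le> 4 * exp (c * x)"
    by (simp add: power_divide power_mult_distrib)
  then have "c ^ 2 * x ^ 2 * exp (- c * x) \<le> 4"
    by (simp add: exp_minus field_simps)
  moreover have "exp (- 2 * c * x) = exp (- c * x) * exp (- c * x)"
    by (simp flip: exp_add)
  ultimately have "c ^ 2 * (x ^ 2 * exp (- 2 * c * x)) \<le> 4 * exp (- c * x)"
    using mult_right_mono[of "c ^ 2 * x ^ 2 * exp (- c * x)" 4 "exp (- c * x)"]
    by (simp add: mult_ac)
  then show ?thesis using c by (simp add: field_simps)
qed

theorem mainTheorem8:
  fixes \<epsilon> :: real
  assumes "\<epsilon> > 0"
  shows "\<exists>K c. K > 0 \<and> c > 0 \<and>
    (\<forall>n \<mu>. (\<forall>(i, j)\<in>off_diag n. eps_balanced \<epsilon> (\<mu> i j)) \<longrightarrow>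
       measure_pmf.prob (random_digraph n \<mu>) {d. \<not> strongly_connected n d}
         \<le> K * exp (- c * real n))"
proof -
  \<comment> \<open>Capping \<epsilon> keeps r positive; the bound P(deg = 0) \<le> 1 - \<epsilon> \<le> r^2 is unaffected.\<close>
  define r where "r = sqrt (1 - min \<epsilon> (1/2))"
  define c where "c = - ln r / 2"
  have r: "0 < r" "r < 1" using assms by (auto simp: r_def)
  then have c: "c > 0" by (simp add: c_def)
  have r_sq: "r ^ 2 = 1 - min \<epsilon> (1/2)" by (simp add: r_def)
  have r_pow: "r ^ n = exp (- 2 * c * real n)" for n
    using r exp_of_nat_mult[of n "ln r"] by (simp add: c_def mult.commute)
  have bound: "measure_pmf.prob (random_digraph n \<mu>) {d. \<not> strongly_connected n d}
          \<le> 4 / c ^ 2 * exp (- c * real n)"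
    if bal: "\<forall>(i, j)\<in>off_diag n. eps_balanced \<epsilon> (\<mu> i j)" for n \<mu>
  proof -
    have "\<forall>(i, j)\<in>off_diag n. measure_pmf.prob (\<mu> i j) {0} \<le> r ^ 2"
      unfolding r_sq using bal by (fastforce dest: eps_balanced_prob_singleton_le[where x = 0])
    from prob_not_strongly_connected_le[OF this] r
    have "measure_pmf.prob (random_digraph n \<mu>) {d. \<not> strongly_connected n d}
            \<le> real n ^ 2 * exp (- 2 * c * real n)"
      by (simp add: r_pow)
    also have "\<dots> \<le> 4 / c ^ 2 * exp (- c * real n)"
      by (rule square_mult_exp_le[OF c]) simp
    finally show ?thesis .
  qed
  moreover have "4 / c ^ 2 > 0" using c by simp
  ultimately show ?thesis using c by blast
qed

end
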